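(* Let $\mathcal{N}$ be a chemical reaction network. The following are equivalent: (i) $\mathcal{N}$ is injective; (ii) for every rate vector $\kappa\in\mathbb{R}_+^{\mathcal{R}}$ and all distinct $a,b\in\overline{\mathbb{R}}_+^n$ such that $\mathcal{Y}_a\cap\mathcal{Y}_b=\emptyset$ and $a-b\in\Gamma$, one has $f_\kappa(a)\neq f_\kappa(b)$. In particular, if $b\in\mathbb{R}^n_+$, then $\mathcal{Y}_a\cap\mathcal{Y}_b=\emptyset$ holds for every $a\in\overline{\mathbb{R}}^n_+$.
   Context: A chemical reaction network $\mathcal{N}=(\mathcal{S},\mathcal{C},\mathcal{R})$ consists of a finite set of species $\mathcal{S}=\{S_1,\dots,S_n\}$, a finite set of complexes $\mathcal{C}\subset\mathbb{Z}_{\ge 0}^n$ (species $S_i$ identified with the $i$-th standard basis vector), and a finite set of reactions $\mathcal{R}\subset\mathcal{C}\times\mathcal{C}$, written $y\to y'$ ($y$ the reactant complex), with $y\ne y'$. $\mathbb{R}_+$ denotes the positive reals and $\overline{\mathbb{R}}_+$ the nonnegative reals. A rate vector is $\kappa=(k_{y\to y'})\in\mathbb{R}_+^{\mathcal{R}}$; the mass-action species formation rate function is $f_\kappa(c)=\sum_{y\to y'\in\mathcal{R}}k_{y\to y'}c^y(y'-y)$, $c^y=\prod_i c_i^{y_i}$. The stoichiometric subspace is $\Gamma=\mathrm{span}\{y'-y:y\to y'\in\mathcal{R}\}$. The network is injective if for every rate vector $\kappa\in\mathbb{R}_+^{\mathcal{R}}$ and all distinct $a,b\in\mathbb{R}^n_+$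 with $a-b\in\Gamma$ one has $f_\kappa(a)\ne f_\kappa(b)$. For $a\in\overline{\mathbb{R}}^n_+$ let $I_a=\{i: a_i=0\}$ and $\mathcal{Y}_a=\{y : y\to y'\in\mathcal{R}\text{ for some }y',\ I_a\cap\mathrm{supp}(y)\ne\emptyset\}$, where $\mathrm{supp}(y)=\{i:y_i\ne 0\}$. *)

theory Defs
  imports "HOL-Analysis.Analysis"
begin

text \<open>Species are indexed by a finite type 's (n = CARD('s)).\<close>

type_synonym 's complex = "'s \<Rightarrow> nat"
type_synonym 's reaction = "'s complex \<times> 's complex"

definition reaction_network :: "'s reaction set \<Rightarrow> bool" where
  "reaction_network R \<longleftrightarrow> finite R \<and> (\<forall>(y, y') \<in> R. y \<noteq> y')"

definition cvec :: "'s complex \<Rightarrow> real ^ 's::finite" where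
  "cvec y = (\<chi> i. real (y i))"

definition monom :: "real ^ 's::finite \<Rightarrow> 's complex \<Rightarrow> real" where
  "monom c y = (\<Prod>i\<in>UNIV. (c $ i) ^ (y i))"

definition rate_fun :: "'s reaction set \<Rightarrow> ('s reaction \<Rightarrow> real) \<Rightarrow> real ^ 's::finite \<Rightarrow> real ^ 's" where
  "rate_fun R \<kappa> c = (\<Sum>r\<in>R. (\<kappa> r * monom c (fst r)) *\<^sub>R (cvec (snd r) - cvec (fst r)))"

definition stoich_subspace :: "'s reaction set \<Rightarrow> (real ^ 's::finite) set" where
  "stoich_subspace R = span ((\<lambda>r. cvec (snd r) - cvec (fst r)) ` R)"

definition rate_vector :: "'s reaction set \<Rightarrow> ('s reaction \<Rightarrow> real) \<Rightarrow> bool" where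
  "rate_vector R \<kappa> \<longleftrightarrow> (\<forall>r\<in>R. \<kappa> r > 0)"

definition positive_vec :: "real ^ 's::finite \<Rightarrow> bool" where
  "positive_vec a \<longleftrightarrow> (\<forall>i. a $ i > 0)"

definition nonneg_vec :: "real ^ 's::finite \<Rightarrow> bool" where
  "nonneg_vec a \<longleftrightarrow> (\<forall>i. a $ i \<ge> 0)"

definition injective_network :: "'s::finite reaction set \<Rightarrow> bool" where
  "injective_network R \<longleftrightarrow>
     (\<forall>\<kappa>. rate_vector R \<kappa> \<longrightarrow>
        (\<forall>a b. positive_vec a \<and> positive_vec b \<and> a \<noteq> b \<and> a - b \<in> stoich_subspace R
               \<longrightarrow> rate_fun R \<kappa> a \<noteq> rate_fun R \<kappa> b))"

definition zero_set :: "real ^ 's::finite \<Rightarrow> 's set" where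
  "zero_set a = {i. a $ i = 0}"

definition Ycal :: "'s::finite reaction set \<Rightarrow> real ^ 's \<Rightarrow> 's complex set" where
  "Ycal R a = {y. (\<exists>y'. (y, y') \<in> R) \<and> zero_set a \<inter> {i. y i \<noteq> 0} \<noteq> {}}"

end

theory Submission
  imports Defs
begin

text \<open>Suppose a, b are nonnegative, a - b \<in> \<Gamma>, \<Y>_a \<inter> \<Y>_b = \<emptyset> and f_\<kappa>(a) = f_\<kappa>(b).
  Shift both points by e d, where d is the indicator of the coordinates vanishing in a or in b;
  for e > 0 the shifted points are positive and their difference is still a - b. Each reaction
  term c^y of f_\<kappa> changes continuously with e, so for small e every nonzero difference
  a^y - b^y keeps its sign, and a vanishing one stays zero because disjointness forces y to
  avoid the shifted coordinates. Rescaling the rate constants by these sign-preserving ratios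
  gives a positive rate vector at which the shifted positive points have equal rates,
  contradicting injectivity. The converse is trivial, since positive points have \<Y> = \<emptyset>.\<close>

lemma monom_eq_0_iff: "monom c y = 0 \<longleftrightarrow> (\<exists>i. c $ i = 0 \<and> y i \<noteq> 0)"
  unfolding monom_def by (auto simp: prod_zero_iff)

lemma monom_add_eq:
  assumes "\<And>i. y i \<noteq> 0 \<Longrightarrow> d $ i = 0"
  shows "monom (c + d) y = monom c y"
  unfolding monom_def
proof (rule prod.cong)
  show "(c + d) $ i ^ y i = c $ i ^ y i" for i
    using assms[of i] by (cases "y i = 0") auto
qed simp

lemma tendsto_monom_shift:
  "((\<lambda>e. monom (c + e *\<^sub>R d) y) \<longlongrightarrow> monom c y) (at_right (0::real))"
proof -
  have "((\<lambda>e. c $ i + e * d $ i) \<longlongrightarrow> c $ i + 0 * d $ i) (at_right (0::real))" for i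
    by (intro tendsto_intros)
  then show ?thesis
    unfolding monom_def by (auto intro!: tendsto_prod tendsto_power)
qed

lemma Ycal_iff_monom_eq_0:
  assumes "(y, y') \<in> R"
  shows "y \<in> Ycal R c \<longleftrightarrow> monom c y = 0"
  using assms by (auto simp: Ycal_def zero_set_def monom_eq_0_iff)

lemma Ycal_positive_vec: "positive_vec b \<Longrightarrow> Ycal R b = {}"
  by (auto simp: Ycal_def zero_set_def positive_vec_def) (metis less_irrefl)

lemma rate_fun_diff:
  "finite R \<Longrightarrow> rate_fun R \<kappa> a - rate_fun R \<kappa> b =
    (\<Sum>r\<in>R. (\<kappa> r * (monom a (fst r) - monom b (fst r))) *\<^sub>R (cvec (snd r) - cvec (fst r)))"
  unfolding rate_fun_def by (simp add: sum_subtractf[symmetric] algebra_simps)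

lemma eventually_same_sign_finite:
  fixes f :: "'a \<Rightarrow> 'b \<Rightarrow> real"
  assumes "finite R" and "\<And>r. r \<in> R \<Longrightarrow> ((\<lambda>x. f x r) \<longlongrightarrow> g r) F"
  shows "\<forall>\<^sub>F x in F. \<forall>r\<in>R. g r \<noteq> 0 \<longrightarrow> f x r * g r > 0"
proof (rule eventually_ball_finite[OF \<open>finite R\<close>], intro ballI)
  fix r assume "r \<in> R"
  show "\<forall>\<^sub>F x in F. g r \<noteq> 0 \<longrightarrow> f x r * g r > 0"
  proof (cases "g r = 0")
    case False
    have "((\<lambda>x. f x r * g r) \<longlongrightarrow> g r * g r) F"
      using assms(2)[OF \<open>r \<in> R\<close>] by (intro tendsto_intros)
    moreover have "g r * g r > 0"
      using False by (auto simp: zero_less_mult_iff linorder_neq_iff)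
    ultimately show ?thesis
      by (auto dest: order_tendstoD(1) elim: eventually_mono)
  qed simp
qed

lemma rate_vector_rescale:
  assumes "rate_vector R \<kappa>"
    and "\<And>r. r \<in> R \<Longrightarrow> A r = 0 \<Longrightarrow> B r = 0"
    and "\<And>r. r \<in> R \<Longrightarrow> A r \<noteq> 0 \<Longrightarrow> B r * A r > 0"
  obtains \<kappa>' where "rate_vector R \<kappa>'" and "\<And>r. r \<in> R \<Longrightarrow> \<kappa>' r * B r = \<kappa> r * A r"
proof
  define \<kappa>' where "\<kappa>' r = (if A r = 0 then \<kappa> r else \<kappa> r * (A r / B r))" for r
  have "A r / B r > 0" if "r \<in> R" "A r \<noteq> 0" for r
    using assms(3)[OF that] by (auto simp: zero_less_divide_iff zero_less_mult_iff)
  then show "rate_vector R \<kappa>'"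
    using assms(1) unfolding rate_vector_def \<kappa>'_def by (simp add: mult_pos_pos del: times_divide_eq_right)
  show "\<kappa>' r * B r = \<kappa> r * A r" if "r \<in> R" for r
    using assms(2,3)[OF that] by (cases "A r = 0") (auto simp: \<kappa>'_def)
qed

lemma shift_positive_vec:
  assumes "nonneg_vec a" and "nonneg_vec d" and "\<And>i. a $ i = 0 \<Longrightarrow> d $ i > 0" and "e > 0"
  shows "positive_vec (a + e *\<^sub>R d)"
  unfolding positive_vec_def
proof
  fix i
  have "a $ i \<ge> 0" "d $ i \<ge> 0" using assms(1,2) by (auto simp: nonneg_vec_def)
  then show "(a + e *\<^sub>R d) $ i > 0"
    using assms(3)[of i] \<open>e > 0\<close> by (cases "a $ i = 0") (auto simp: add_pos_nonneg)
qed

lemma injective_network_boundary: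
  fixes R :: "'s::finite reaction set"
  assumes "finite R" and "injective_network R" and "rate_vector R \<kappa>"
    and "nonneg_vec a" and "nonneg_vec b" and "a \<noteq> b"
    and disj: "Ycal R a \<inter> Ycal R b = {}" and "a - b \<in> stoich_subspace R"
  shows "rate_fun R \<kappa> a \<noteq> rate_fun R \<kappa> b"
proof
  assume eq: "rate_fun R \<kappa> a = rate_fun R \<kappa> b"
  define d :: "real ^ 's" where "d = (\<chi> i. if a $ i = 0 \<or> b $ i = 0 then 1 else 0)"
  define A :: "'s reaction \<Rightarrow> real" where "A r = monom a (fst r) - monom b (fst r)" for r
  define B :: "real \<Rightarrow> 's reaction \<Rightarrow> real" where "B e r = monom (a + e *\<^sub>R d) (fst r) - monom (b + e *\<^sub>R d) (fst r)" for e r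
  have "\<forall>\<^sub>F e in at_right (0::real). e > 0 \<and> (\<forall>r\<in>R. A r \<noteq> 0 \<longrightarrow> B e r * A r > 0)"
    unfolding A_def B_def
    by (intro eventually_conj eventually_same_sign_finite \<open>finite R\<close> tendsto_diff
        tendsto_monom_shift eventually_at_right_less)
  then obtain e :: real where "e > 0" and sign: "\<forall>r\<in>R. A r \<noteq> 0 \<longrightarrow> B e r * A r > 0"
    using eventually_happens[of _ "at_right (0::real)"] by auto
  have unchanged: "B e r = 0" if "r \<in> R" "A r = 0" for r
  proof -
    obtain y y' where r: "r = (y, y')" by (cases r)
    have "monom a y \<noteq> 0 \<or> monom b y \<noteq> 0"
      using disj Ycal_iff_monom_eq_0[of y y' R] that(1) r by blast
    then have "monom a y \<noteq> 0 \<and> monom b y \<noteq> 0"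
      using that(2) r by (auto simp: A_def)
    then have "y i \<noteq> 0 \<Longrightarrow> (e *\<^sub>R d) $ i = 0" for i
      by (auto simp: monom_eq_0_iff d_def)
    then show ?thesis
      using that(2) r by (simp add: A_def B_def monom_add_eq)
  qed
  obtain \<kappa>' where "rate_vector R \<kappa>'" and rescaled: "\<And>r. r \<in> R \<Longrightarrow> \<kappa>' r * B e r = \<kappa> r * A r"
    using rate_vector_rescale[OF \<open>rate_vector R \<kappa>\<close>, of A "B e"] unchanged sign by blast
  have "nonneg_vec d"
    by (simp add: nonneg_vec_def d_def)
  then have "positive_vec (a + e *\<^sub>R d)" "positive_vec (b + e *\<^sub>R d)"
    using assms(4,5) \<open>e > 0\<close> by (auto intro!: shift_positive_vec simp: d_def)
  moreover have "(a + e *\<^sub>R d) - (b + e *\<^sub>R d) = a - b"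
    by simp
  moreover have "rate_fun R \<kappa>' (a + e *\<^sub>R d) = rate_fun R \<kappa>' (b + e *\<^sub>R d)"
    using rate_fun_diff[OF \<open>finite R\<close>, of \<kappa>' "a + e *\<^sub>R d" "b + e *\<^sub>R d"]
      rate_fun_diff[OF \<open>finite R\<close>, of \<kappa> a b] eq rescaled
    by (simp add: A_def B_def cong: sum.cong)
  ultimately show False
    using \<open>injective_network R\<close> \<open>rate_vector R \<kappa>'\<close> assms(6,8)
    unfolding injective_network_def by (metis eq_iff_diff_eq_0)
qed

theorem proposition5p2:
  fixes R :: "'s::finite reaction set"
  assumes "reaction_network R"
  shows "(injective_network R \<longleftrightarrow>
           (\<forall>\<kappa>. rate_vector R \<kappa> \<longrightarrow>
              (\<forall>a b. nonneg_vec a \<and> nonneg_vec b \<and> a \<noteq> b \<and>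
                     Ycal R a \<inter> Ycal R b = {} \<and> a - b \<in> stoich_subspace R
                     \<longrightarrow> rate_fun R \<kappa> a \<noteq> rate_fun R \<kappa> b)))
         \<and> (\<forall>a b. positive_vec b \<and> nonneg_vec a \<longrightarrow> Ycal R a \<inter> Ycal R b = {})"
proof -
  have "finite R"
    using assms by (simp add: reaction_network_def)
  have "nonneg_vec a" if "positive_vec a" for a :: "real ^ 's"
    using that by (auto simp: nonneg_vec_def positive_vec_def less_imp_le)
  then show ?thesis
    using injective_network_boundary[OF \<open>finite R\<close>] Ycal_positive_vec
    unfolding injective_network_def by blast
qed

end
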